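(* Let $Z$ be an absolutely continuous real random variable with cdf $F$, let $(z_n)_{n\ge1}$ be a real sequence with $z_n\to z$, and let $\beta\in(0,1]$. Then $LD_S^\beta(z_n,F)\to LD_S^\beta(z,F)$ as $n\to\infty$.
   Context: $\lambda_z^\beta=\inf\{\lambda>0: F(z+\lambda)-F(z-\lambda)\ge\beta\}$ and $LD_S^\beta(z,F)=\frac{2}{\beta^2}\big(F(z+\lambda_z^\beta)-F(z)\big)\big(F(z)-F(z-\lambda_z^\beta)\big)$. *)

theory Defs
  imports "HOL-Probability.Probability"
begin

definition lam_set :: "(real \<Rightarrow> real) \<Rightarrow> real \<Rightarrow> real \<Rightarrow> real set" where
  "lam_set F beta z = {l. l > 0 \<and> F (z + l) - F (z - l) \<ge> beta}"

text \<open>lambda_z^beta = inf of lam_set (only meaningful when lam_set is nonempty;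
  otherwise it is +infinity, handled in LD_S below).\<close>
definition lambda_beta :: "(real \<Rightarrow> real) \<Rightarrow> real \<Rightarrow> real \<Rightarrow> real" where
  "lambda_beta F beta z = Inf (lam_set F beta z)"

text \<open>LD_S^beta(z,F). If lambda = +infinity (empty set), then with the conventions
  F(+infinity) = 1 and F(-infinity) = 0 the value is 2/beta^2 (1 - F z) F z.\<close>
definition LD_S :: "real \<Rightarrow> real \<Rightarrow> (real \<Rightarrow> real) \<Rightarrow> real" where
  "LD_S beta z F =
     (if lam_set F beta z \<noteq> {} then
        2 / beta\<^sup>2 * (F (z + lambda_beta F beta z) - F z) * (F z - F (z - lambda_beta F beta z))
      else 2 / beta\<^sup>2 * (1 - F z) * F z)"

end

theory Submission
  imports Defs
begin

text \<open>
  For continuous nondecreasing F and any \<beta> > 0 the map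
  z \<mapsto> LD_S \<beta> z F is continuous.
  Widening an admissible radius at z by |y - z| gives an admissible radius at y, so either no
  point has an admissible radius, and LD_S is an explicit continuous expression in F z, or
  every point has one. In the latter case the infimum \<lambda>_z is attained with
  F(z + \<lambda>_z) - F(z - \<lambda>_z) = \<beta>, and by monotonicity every radius at this level gives the same
  values F(z \<pm> l), so LD_S may be evaluated at any such radius. Along z_n \<rightarrow> z the radii
  \<lambda>_{z_n} stay bounded; a convergent subsequence has a limit that is again at level \<beta> for z,
  and continuity of F gives convergence of LD_S along it.
\<close>

lemma LIMSEQ_subseq_subseqI:
  fixes X :: "nat \<Rightarrow> 'a::metric_space"
  assumes "\<And>r :: nat \<Rightarrow> nat. strict_mono r \<Longrightarrow>
    \<exists>s :: nat \<Rightarrow> nat. strict_mono s \<and> (X \<circ> r \<circ> s) \<longlonglongrightarrow> L"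
  shows "X \<longlonglongrightarrow> L"
proof (rule ccontr)
  assume "\<not> X \<longlonglongrightarrow> L"
  then obtain e where "e > 0" and far: "\<forall>N. \<exists>n\<ge>N. \<not> dist (X n) L < e"
    unfolding LIMSEQ_def by blast
  have "infinite {n. \<not> dist (X n) L < e}"
    using far by (simp add: infinite_nat_iff_unbounded_le)
  then obtain r :: "nat \<Rightarrow> nat" where r: "strict_mono r" "\<And>n. r n \<in> {n. \<not> dist (X n) L < e}"
    using infinite_enumerate by blast
  obtain s where "(X \<circ> r \<circ> s) \<longlonglongrightarrow> L"
    using assms[OF r(1)] by blast
  then obtain N where "\<And>n. n \<ge> N \<Longrightarrow> dist ((X \<circ> r \<circ> s) n) L < e"
    using \<open>e > 0\<close> unfolding LIMSEQ_def by blast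
  then show False
    using r(2)[of "s N"] by auto
qed

lemma lam_set_shift:
  assumes "mono F" "l \<in> lam_set F beta z"
  shows "l + \<bar>y - z\<bar> \<in> lam_set F beta y"
proof -
  have "F (z + l) \<le> F (y + (l + \<bar>y - z\<bar>))" "F (y - (l + \<bar>y - z\<bar>)) \<le> F (z - l)"
    by (intro monoD[OF \<open>mono F\<close>]; simp)+
  with assms(2) show ?thesis
    unfolding lam_set_def by auto
qed

lemma bdd_below_lam_set: "bdd_below (lam_set F beta z)"
  unfolding lam_set_def by (rule bdd_belowI[of _ 0]) auto

lemma lambda_beta_le:
  assumes "l \<in> lam_set F beta z"
  shows "lambda_beta F beta z \<le> l"
  using assms bdd_below_lam_set unfolding lambda_beta_def by (simp add: cInf_lower)

lemma continuous_on_symmetric_increment: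
  fixes F :: "real \<Rightarrow> real"
  assumes "\<And>x. isCont F x"
  shows "continuous_on UNIV (\<lambda>l. F (z + l) - F (z - l))"
proof -
  have F: "continuous_on UNIV F"
    using assms by (simp add: continuous_at_imp_continuous_on)
  show ?thesis
    by (intro continuous_intros continuous_on_compose2[OF F]) auto
qed

lemma lambda_beta_mem:
  assumes "\<And>x. isCont F x" and "0 < beta" and ne: "lam_set F beta z \<noteq> {}"
  shows "lambda_beta F beta z \<in> lam_set F beta z"
proof -
  have "lam_set F beta z = {l. 0 \<le> l} \<inter> {l. beta \<le> F (z + l) - F (z - l)}"
    using \<open>0 < beta\<close> unfolding lam_set_def by (auto simp: order.order_iff_strict)
  then have "closed (lam_set F beta z)"
    using continuous_on_symmetric_increment[OF assms(1)]
    by (simp add: closed_Int closed_Collect_le continuous_on_const continuous_on_id)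
  then show ?thesis
    unfolding lambda_beta_def using closed_contains_Inf[OF ne bdd_below_lam_set] by blast
qed

lemma lambda_beta_level:
  assumes "\<And>x. isCont F x" and "0 < beta" and ne: "lam_set F beta z \<noteq> {}"
  shows "F (z + lambda_beta F beta z) - F (z - lambda_beta F beta z) = beta"
proof -
  let ?G = "\<lambda>l. F (z + l) - F (z - l)" and ?lam = "lambda_beta F beta z"
  have "?lam \<in> lam_set F beta z"
    using lambda_beta_mem[OF assms] .
  then have "?G 0 \<le> beta" "beta \<le> ?G ?lam" "0 \<le> ?lam"
    using \<open>0 < beta\<close> unfolding lam_set_def by auto
  moreover have "continuous_on {0..?lam} ?G"
    using continuous_on_subset[OF continuous_on_symmetric_increment[OF assms(1)]] by blast
  ultimately obtain x where x: "0 \<le> x" "x \<le> ?lam" "?G x = beta"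
    using IVT'[of ?G 0 beta ?lam] by blast
  then have "x \<in> lam_set F beta z"
    using \<open>0 < beta\<close> unfolding lam_set_def by (cases "x = 0") auto
  with x show ?thesis
    using lambda_beta_le[of x F beta z] by simp
qed

lemma mono_symmetric_increments_eq:
  fixes F :: "real \<Rightarrow> real"
  assumes "mono F" and "F (z + l1) - F (z - l1) = F (z + l2) - F (z - l2)"
  shows "F (z + l1) = F (z + l2)" and "F (z - l1) = F (z - l2)"
proof -
  have "F (z + l1) = F (z + l2) \<and> F (z - l1) = F (z - l2)"
  proof (cases "l1 \<le> l2")
    case True
    then have "F (z + l1) \<le> F (z + l2)" "F (z - l2) \<le> F (z - l1)"
      by (simp_all add: monoD[OF \<open>mono F\<close>])
    with assms(2) show ?thesis by linarith
  next
    case False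
    then have "F (z + l2) \<le> F (z + l1)" "F (z - l1) \<le> F (z - l2)"
      by (simp_all add: monoD[OF \<open>mono F\<close>])
    with assms(2) show ?thesis by linarith
  qed
  then show "F (z + l1) = F (z + l2)" and "F (z - l1) = F (z - l2)"
    by simp_all
qed

lemma LD_S_eq_level:
  assumes "\<And>x. isCont F x" and "mono F" and "0 < beta" and ne: "lam_set F beta z \<noteq> {}"
    and "F (z + l) - F (z - l) = beta"
  shows "LD_S beta z F = 2 / beta\<^sup>2 * (F (z + l) - F z) * (F z - F (z - l))"
proof -
  let ?lam = "lambda_beta F beta z"
  have "F (z + ?lam) - F (z - ?lam) = F (z + l) - F (z - l)"
    using lambda_beta_level[OF assms(1,3) ne] assms(5) by simp
  then have "F (z + ?lam) = F (z + l)" "F (z - ?lam) = F (z - l)"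
    using mono_symmetric_increments_eq[OF \<open>mono F\<close>] by blast+
  with ne show ?thesis
    unfolding LD_S_def by simp
qed

lemma tendsto_LD_S:
  assumes cont: "\<And>x. isCont F x" and "mono F" and "0 < beta"
    and ne: "\<And>x. lam_set F beta x \<noteq> {}" and "y \<longlonglongrightarrow> z"
  shows "(\<lambda>n. LD_S beta (y n) F) \<longlonglongrightarrow> LD_S beta z F"
proof (rule LIMSEQ_subseq_subseqI)
  fix r :: "nat \<Rightarrow> nat"
  assume "strict_mono r"
  define w where "w = y \<circ> r"
  define m where "m n = lambda_beta F beta (w n)" for n
  have w: "w \<longlonglongrightarrow> z"
    unfolding w_def using LIMSEQ_subseq_LIMSEQ[OF \<open>y \<longlonglongrightarrow> z\<close> \<open>strict_mono r\<close>] .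
  obtain B where B: "\<And>n. \<bar>w n - z\<bar> \<le> B"
    using convergent_imp_Bseq[OF convergentI[OF tendsto_diff[OF w tendsto_const[of z]]]]
    by (metis BseqE real_norm_def)
  have "range m \<subseteq> {0 .. lambda_beta F beta z + B}"
  proof clarify
    fix n
    have "lambda_beta F beta z + \<bar>w n - z\<bar> \<in> lam_set F beta (w n)"
      using lam_set_shift[OF \<open>mono F\<close> lambda_beta_mem[OF cont \<open>0 < beta\<close> ne]] .
    then have "m n \<le> lambda_beta F beta z + \<bar>w n - z\<bar>"
      unfolding m_def by (rule lambda_beta_le)
    moreover have "m n \<in> lam_set F beta (w n)"
      unfolding m_def by (rule lambda_beta_mem[OF cont \<open>0 < beta\<close> ne])
    then have "0 \<le> m n"
      unfolding lam_set_def by simp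
    ultimately show "m n \<in> {0 .. lambda_beta F beta z + B}"
      using B[of n] by simp
  qed
  then have "bounded (range m)"
    by (rule bounded_subset[OF bounded_closed_interval])
  then obtain s l where "strict_mono s" and ms: "(\<lambda>n. m (s n)) \<longlonglongrightarrow> l"
    using bounded_imp_convergent_subsequence unfolding comp_def by blast
  have ws: "(\<lambda>n. w (s n)) \<longlonglongrightarrow> z"
    using LIMSEQ_subseq_LIMSEQ[OF w \<open>strict_mono s\<close>] unfolding comp_def .
  define H where "H x l = 2 / beta\<^sup>2 * (F (x + l) - F x) * (F x - F (x - l))" for x l
  have level: "F (w (s n) + m (s n)) - F (w (s n) - m (s n)) = beta" for n
    unfolding m_def using lambda_beta_level[OF cont \<open>0 < beta\<close> ne] .
  have "(\<lambda>n. F (w (s n) + m (s n)) - F (w (s n) - m (s n))) \<longlonglongrightarrow> F (z + l) - F (z - l)"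
    by (intro tendsto_intros isCont_tendsto_compose[OF cont] ws ms)
  then have "F (z + l) - F (z - l) = beta"
    by (simp add: level LIMSEQ_const_iff)
  then have "LD_S beta z F = H z l"
    unfolding H_def by (rule LD_S_eq_level[OF cont \<open>mono F\<close> \<open>0 < beta\<close> ne])
  moreover have "(\<lambda>n. H (w (s n)) (m (s n))) \<longlonglongrightarrow> H z l"
    unfolding H_def by (intro tendsto_intros isCont_tendsto_compose[OF cont] ws ms)
  moreover have "LD_S beta (w (s n)) F = H (w (s n)) (m (s n))" for n
    unfolding H_def using LD_S_eq_level[OF cont \<open>mono F\<close> \<open>0 < beta\<close> ne level] .
  ultimately show "\<exists>s. strict_mono s \<and> ((\<lambda>n. LD_S beta (y n) F) \<circ> r \<circ> s) \<longlonglongrightarrow> LD_S beta z F"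
    using \<open>strict_mono s\<close> unfolding w_def by (auto simp: comp_def)
qed

lemma isCont_LD_S:
  assumes cont: "\<And>x. isCont F x" and "mono F" and "0 < beta"
  shows "isCont (\<lambda>x. LD_S beta x F) z"
proof (cases "lam_set F beta z = {}")
  case True
  then have "lam_set F beta x = {}" for x
    using lam_set_shift[OF \<open>mono F\<close>, of _ beta x z] by blast
  then have "(\<lambda>x. LD_S beta x F) = (\<lambda>x. 2 / beta\<^sup>2 * (1 - F x) * F x)"
    unfolding LD_S_def by simp
  moreover have "isCont (\<lambda>x. 2 / beta\<^sup>2 * (1 - F x) * F x) z"
    by (intro continuous_intros cont)
  ultimately show ?thesis
    by simp
next
  case False
  then have "lam_set F beta x \<noteq> {}" for x
    using lam_set_shift[OF \<open>mono F\<close>, of _ beta z x] by blast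
  then show ?thesis
    by (intro continuous_at_sequentiallyI tendsto_LD_S[OF cont \<open>mono F\<close> \<open>0 < beta\<close>])
qed

lemma (in real_distribution) isCont_cdf_if_absolutely_continuous:
  assumes "absolutely_continuous lborel M"
  shows "isCont (cdf M) x"
proof -
  have "{x} \<in> null_sets lborel"
    by (simp add: null_sets_def)
  then have "{x} \<in> null_sets M"
    using assms unfolding absolutely_continuous_def by blast
  then show ?thesis
    by (simp add: isCont_cdf measure_eq_0_null_sets)
qed

theorem mainTheorem12:
  fixes P :: "'a measure" and Z :: "'a \<Rightarrow> real" and F :: "real \<Rightarrow> real"
    and zs :: "nat \<Rightarrow> real" and z beta :: real
  assumes "prob_space P"
    and "Z \<in> borel_measurable P"
    and "absolutely_continuous lborel (distr P borel Z)"
    and "F = cdf (distr P borel Z)"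
    and "zs \<longlonglongrightarrow> z"
    and "0 < beta" and "beta \<le> 1"
  shows "(\<lambda>n. LD_S beta (zs n) F) \<longlonglongrightarrow> LD_S beta z F"
proof -
  interpret real_distribution "distr P borel Z"
    using prob_space.real_distribution_distr[OF assms(1,2)] .
  have "isCont F x" for x
    unfolding assms(4) using isCont_cdf_if_absolutely_continuous[OF assms(3)] .
  moreover have "mono F"
    unfolding assms(4) by (intro monoI cdf_nondecreasing)
  ultimately show ?thesis
    using isCont_tendsto_compose[OF isCont_LD_S assms(5)] \<open>0 < beta\<close> by blast
qed

end
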